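(* Let $X$ be a metric space, $R\ge0$, $K>1$, and let $\alpha\colon S\to X$ be a $\frac1K$-almost isometric $R$-circle. Then $d(\alpha(p),\alpha(q))\ge d_S(p,q)-\frac{K-1}{K}\cdot\frac{|S|}{2}-2R$ for all $p,q\in S$.
   Context: A Riemannian circle $S$ is a circle with its length metric, of length $|S|$. An $R$-circle is a map $\alpha\colon S\to X$ from a Riemannian circle with $d(\alpha(p),\alpha(q))\le d_S(p,q)+R$ for all $p,q\in S$; it is $\frac1K$-almost isometric if $d(\alpha(p),\alpha(\bar p))\ge\frac1K\cdot\frac{|S|}2$ for every pair of antipodal points $p,\bar p\in S$. *)

theory Defs
  imports "HOL-Analysis.Analysis"
begin

text \<open>A Riemannian circle of length L > 0 is modelled by the parameter set {0..<L}
  (arc-length coordinate), with the intrinsic length metric.\<close>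

definition circ_pts :: "real \<Rightarrow> real set" where
  "circ_pts L = {0..<L}"

definition circ_mod :: "real \<Rightarrow> real \<Rightarrow> real" where
  "circ_mod L x = x - L * of_int \<lfloor>x / L\<rfloor>"

definition circ_dist :: "real \<Rightarrow> real \<Rightarrow> real \<Rightarrow> real" where
  "circ_dist L p q = min (circ_mod L (p - q)) (L - circ_mod L (p - q))"

definition circ_antipode :: "real \<Rightarrow> real \<Rightarrow> real" where
  "circ_antipode L p = circ_mod L (p + L / 2)"

definition R_circle :: "real \<Rightarrow> real \<Rightarrow> (real \<Rightarrow> 'a::metric_space) \<Rightarrow> bool" where
  "R_circle L R \<alpha> \<longleftrightarrow>
     (\<forall>p\<in>circ_pts L. \<forall>q\<in>circ_pts L. dist (\<alpha> p) (\<alpha> q) \<le> circ_dist L p q + R)"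

definition almost_isometric :: "real \<Rightarrow> real \<Rightarrow> (real \<Rightarrow> 'a::metric_space) \<Rightarrow> bool" where
  "almost_isometric L c \<alpha> \<longleftrightarrow>
     (\<forall>p\<in>circ_pts L. dist (\<alpha> p) (\<alpha> (circ_antipode L p)) \<ge> c * (L / 2))"

end

theory Submission
  imports Defs
begin

text \<open>For any q, the arcs from p to q and from q to the antipode of p add up to half the
  circle. The triangle inequality through q then bounds the long chord from p to its antipode,
  given by almost isometry, by d(p, q) plus the R-circle bound on the chord from q to the
  antipode; this yields the estimate even with R in place of 2R.\<close>

lemma circ_mod_add_int_mult:
  assumes "L > 0" "0 \<le> x" "x < L"
  shows "circ_mod L (x + of_int k * L) = x"
proof -
  have "\<lfloor>(x + of_int k * L) / L\<rfloor> = k"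
    using assms by (simp add: floor_eq_iff field_simps)
  then show ?thesis by (simp add: circ_mod_def)
qed

lemma circ_dist_eq_abs:
  assumes "L > 0" "p \<in> circ_pts L" "q \<in> circ_pts L"
  shows "circ_dist L p q = min \<bar>p - q\<bar> (L - \<bar>p - q\<bar>)"
proof (cases "p - q \<ge> 0")
  case True
  then have "circ_mod L (p - q) = p - q"
    using assms circ_mod_add_int_mult[of L "p - q" 0] by (simp add: circ_pts_def)
  with True show ?thesis by (simp add: circ_dist_def)
next
  case False
  then have "circ_mod L (p - q) = p - q + L"
    using assms circ_mod_add_int_mult[of L "p - q + L" "-1"] by (simp add: circ_pts_def)
  with False show ?thesis by (simp add: circ_dist_def min.commute)
qed

lemma circ_antipode_eq:
  assumes "L > 0" "p \<in> circ_pts L"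
  shows "circ_antipode L p = (if p < L / 2 then p + L / 2 else p - L / 2)"
proof (cases "p < L / 2")
  case True
  then show ?thesis
    using assms circ_mod_add_int_mult[of L "p + L / 2" 0] by (simp add: circ_antipode_def circ_pts_def)
next
  case False
  then have "circ_mod L (p - L / 2 + of_int 1 * L) = p - L / 2"
    using assms by (intro circ_mod_add_int_mult) (auto simp: circ_pts_def)
  with False show ?thesis by (simp add: circ_antipode_def algebra_simps)
qed

lemma circ_antipode_in_circ_pts:
  assumes "L > 0" "p \<in> circ_pts L"
  shows "circ_antipode L p \<in> circ_pts L"
  using assms by (auto simp: circ_antipode_eq circ_pts_def)

lemma circ_dist_add_circ_dist_antipode:
  assumes "L > 0" "p \<in> circ_pts L" "q \<in> circ_pts L"
  shows "circ_dist L p q + circ_dist L q (circ_antipode L p) = L / 2"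
  using assms circ_antipode_in_circ_pts[OF assms(1,2)]
  by (auto simp: circ_dist_eq_abs circ_antipode_eq circ_pts_def min_def abs_if split: if_splits)

lemma almost_isometric_R_circle_lower_bound:
  fixes \<alpha> :: "real \<Rightarrow> 'a::metric_space"
  assumes "L > 0" "R_circle L R \<alpha>" "almost_isometric L c \<alpha>"
    and p: "p \<in> circ_pts L" and q: "q \<in> circ_pts L"
  shows "dist (\<alpha> p) (\<alpha> q) \<ge> circ_dist L p q - (1 - c) * (L / 2) - R"
proof -
  define p' where "p' = circ_antipode L p"
  have p': "p' \<in> circ_pts L"
    unfolding p'_def using assms(1) p by (rule circ_antipode_in_circ_pts)
  have "c * (L / 2) \<le> dist (\<alpha> p) (\<alpha> p')"
    using assms(3) p by (simp add: almost_isometric_def p'_def)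
  also have "\<dots> \<le> dist (\<alpha> p) (\<alpha> q) + dist (\<alpha> q) (\<alpha> p')"
    by (rule dist_triangle)
  also have "dist (\<alpha> q) (\<alpha> p') \<le> circ_dist L q p' + R"
    using assms(2) q p' by (simp add: R_circle_def)
  finally have "c * (L / 2) \<le> dist (\<alpha> p) (\<alpha> q) + (circ_dist L q p' + R)"
    by simp
  moreover have "(1 - c) * (L / 2) = L / 2 - c * (L / 2)"
    by (simp add: field_simps)
  ultimately show ?thesis
    using circ_dist_add_circ_dist_antipode[OF assms(1) p q] unfolding p'_def by linarith
qed

theorem lemma3p1:
  fixes \<alpha> :: "real \<Rightarrow> 'a::metric_space" and L R K :: real
  assumes "L > 0" and "R \<ge> 0" and "K > 1"
    and "R_circle L R \<alpha>"
    and "almost_isometric L (1 / K) \<alpha>"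
  shows "\<forall>p\<in>circ_pts L. \<forall>q\<in>circ_pts L.
           dist (\<alpha> p) (\<alpha> q) \<ge> circ_dist L p q - (K - 1) / K * (L / 2) - 2 * R"
proof (intro ballI)
  fix p q assume "p \<in> circ_pts L" "q \<in> circ_pts L"
  then have "dist (\<alpha> p) (\<alpha> q) \<ge> circ_dist L p q - (1 - 1 / K) * (L / 2) - R"
    using assms(1,4,5) by (rule almost_isometric_R_circle_lower_bound[rotated 3])
  moreover have "(K - 1) / K = 1 - 1 / K"
    using assms(3) by (simp add: field_simps)
  ultimately show "dist (\<alpha> p) (\<alpha> q) \<ge> circ_dist L p q - (K - 1) / K * (L / 2) - 2 * R"
    using assms(2) by simp
qed

end
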